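(* Consider $n$ agents over a fixed undirected connected graph with symmetric nonnegative weights $a_{ij}=a_{ji}$ ($a_{ij}>0$ iff $i,j$ are neighbors). Assume the CFP solution set $\mathbf{X}^*$ is non-empty. Let $x_i(t)\in\mathbb{R}^m$ evolve according to $$\dot x_i(t)=\sum_{j\in N_i}a_{ij}(x_j(t)-x_i(t))-\tau\Big(\big[x_i(t)-P_{X_i}(x_i(t))\big]+\nabla g_i^+(x_i(t))\Big),\quad i=1,\dots,n,$$ with $\tau>0$. Then the agents reach consensus asymptotically and there is $x^*\in\mathbf{X}^*$ with $\lim_{t\to\infty}x_i(t)=x^*$ for all $i$.
   Context: For each $i$, $g_i:\mathbb{R}^m\to\mathbb{R}$ convex continuous, $X_i\subset\mathbb{R}^m$ closed convex, $X=\bigcap_i X_i$; the CFP asks for $x$ with $g_i(x)\le0$ for all $i$ and $x\in X$, with solution set $\mathbf{X}^*$. $g_i^+=\max[g_i,0]$; $\nabla g_i^+(x)$ is a subgradient of $g_i^+$ at $x$, chosen as $0$ if $g_i(x)\le0$ and as a subgradient of $g_i$ otherwise, piecewise continuous in $x$; $P_{X_i}$ is Euclidean projection onto $X_i$. Consensus means $\|x_i(t)-x_j(t)\|\to0$ for all $i,j$. *)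

theory Defs
  imports "HOL-Analysis.Analysis"
begin

definition cfp_solutions :: "('n \<Rightarrow> 'a \<Rightarrow> real) \<Rightarrow> ('n \<Rightarrow> 'a set) \<Rightarrow> 'a set" where
  "cfp_solutions g X = {x. (\<forall>i. g i x \<le> 0) \<and> x \<in> (\<Inter>i. X i)}"

definition is_subgradient :: "('a::real_inner \<Rightarrow> real) \<Rightarrow> 'a \<Rightarrow> 'a \<Rightarrow> bool" where
  "is_subgradient f x d \<longleftrightarrow> (\<forall>y. f x + inner d (y - x) \<le> f y)"

definition subgrad_plus_selection :: "('a::real_inner \<Rightarrow> real) \<Rightarrow> ('a \<Rightarrow> 'a) \<Rightarrow> bool" where
  "subgrad_plus_selection g d \<longleftrightarrow>
     (\<forall>x. is_subgradient (\<lambda>y. max (g y) 0) x (d x)) \<and>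
     (\<forall>x. g x \<le> 0 \<longrightarrow> d x = 0) \<and>
     (\<forall>x. g x > 0 \<longrightarrow> is_subgradient g x (d x))"

definition piecewise_continuous :: "('a::topological_space \<Rightarrow> 'b::topological_space) \<Rightarrow> bool" where
  "piecewise_continuous f \<longleftrightarrow>
     (\<exists>P. finite P \<and> \<Union>P = UNIV \<and> (\<forall>S\<in>P. continuous_on S f))"

end

theory Submission
  imports Defs
begin

text \<open>For every feasible point \<open>z\<close>, the squared distance \<open>W\<^sub>z(t) = \<Sum>\<^sub>i |x\<^sub>i(t) - z|\<^sup>2\<close>
  decreases at rate at least \<open>2 \<Phi>(x(t))\<close>, where
  \<open>\<Phi> = \<onehalf> \<Sum> a\<^sub>i\<^sub>j |x\<^sub>j - x\<^sub>i|\<^sup>2 + \<tau> \<Sum> |x\<^sub>i - P\<^sub>X\<^sub>i x\<^sub>i|\<^sup>2 + \<tau> \<Sum> g\<^sub>i\<^sup>+(x\<^sub>i) \<ge> 0\<close>: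
  by symmetry of the weights the coupling contributes exactly \<open>-\<onehalf> \<Sum> a\<^sub>i\<^sub>j |x\<^sub>j - x\<^sub>i|\<^sup>2\<close>,
  the projection term is controlled by the obtuse-angle property of \<open>P\<^sub>X\<^sub>i\<close> and the
  subgradient term by the subgradient inequality of \<open>g\<^sub>i\<^sup>+\<close> at \<open>z\<close>.
  Hence the trajectory is bounded and \<open>\<Phi>\<close> cannot stay away from \<open>0\<close>, so along some
  \<open>t\<^sub>n \<rightarrow> \<infinity>\<close> a subsequence of \<open>x(t\<^sub>n)\<close> converges to a configuration of zero energy,
  which on a connected graph is a consensus at some \<open>c \<in> X\<^sup>*\<close>. Finally \<open>W\<^sub>c\<close> is
  nonincreasing and tends to \<open>0\<close> along that subsequence, so it tends to \<open>0\<close>.\<close>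

lemma has_real_derivative_norm_diff_square:
  fixes f :: "real \<Rightarrow> 'a::real_inner"
  assumes "(f has_vector_derivative f') (at t within S)"
  shows "((\<lambda>t. (norm (f t - z))\<^sup>2) has_real_derivative 2 * inner f' (f t - z)) (at t within S)"
proof -
  have "((\<lambda>t. f t - z) has_derivative (\<lambda>h. h *\<^sub>R f')) (at t within S)"
    using has_derivative_diff[OF assms[unfolded has_vector_derivative_def] has_derivative_const]
    by simp
  from has_derivative_inner[OF this this] show ?thesis
    unfolding power2_norm_eq_inner has_real_derivative_iff_has_vector_derivative
      has_vector_derivative_def
    by (rule has_derivative_eq_rhs) (simp add: fun_eq_iff inner_commute)
qed

lemma has_real_derivative_nonpos_imp_antimono_within:
  fixes h :: "real \<Rightarrow> real"
  assumes "s \<le> u" "{s..u} \<subseteq> T"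
    and deriv: "\<And>t. t \<in> {s..u} \<Longrightarrow> \<exists>D. (h has_real_derivative D) (at t within T) \<and> D \<le> 0"
  shows "h u \<le> h s"
proof (rule DERIV_nonpos_imp_decreasing_open[OF \<open>s \<le> u\<close>])
  fix t assume t: "s < t" "t < u"
  have "t \<in> interior T"
    using interior_mono[OF \<open>{s..u} \<subseteq> T\<close>] t by auto
  then have "at t within T = at t"
    by (rule at_within_interior)
  moreover obtain D where "(h has_real_derivative D) (at t within T)" "D \<le> 0"
    using deriv[of t] t by auto
  ultimately show "\<exists>D. (h has_real_derivative D) (at t) \<and> D \<le> 0"
    by auto
next
  have "continuous (at t within {s..u}) h" if t: "t \<in> {s..u}" for t
  proof -
    obtain D where "(h has_real_derivative D) (at t within T)"
      using deriv[OF t] by blast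
    then have "continuous (at t within T) h"
      by (rule DERIV_continuous)
    then show ?thesis
      using \<open>{s..u} \<subseteq> T\<close> by (rule continuous_within_subset)
  qed
  then show "continuous_on {s..u} h"
    by (simp add: continuous_on_eq_continuous_within)
qed

lemma dissipation_vanishes_along_seq:
  fixes V \<Phi> :: "real \<Rightarrow> real"
  assumes V_nonneg: "\<And>t. t \<ge> 0 \<Longrightarrow> V t \<ge> 0"
    and \<Phi>_nonneg: "\<And>t. t \<ge> 0 \<Longrightarrow> \<Phi> t \<ge> 0"
    and V_deriv: "\<And>t. t \<ge> 0 \<Longrightarrow> \<exists>D. (V has_real_derivative D) (at t within {0..}) \<and> D \<le> - \<Phi> t"
  obtains s where "\<And>n. s n \<ge> real n" "(\<lambda>n. \<Phi> (s n)) \<longlonglongrightarrow> 0"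
proof -
  have small: "\<exists>t\<ge>T. \<Phi> t < \<epsilon>" if "\<epsilon> > 0" "T \<ge> 0" for \<epsilon> T
  proof (rule ccontr)
    assume "\<not> (\<exists>t\<ge>T. \<Phi> t < \<epsilon>)"
    then have large: "\<Phi> t \<ge> \<epsilon>" if "t \<ge> T" for t
      using that by (meson not_le)
    define u where "u = T + V T / \<epsilon> + 1"
    have "T \<le> u"
      using V_nonneg[OF \<open>T \<ge> 0\<close>] \<open>\<epsilon> > 0\<close> by (simp add: u_def)
    \<comment> \<open>\<open>V + \<epsilon> t\<close> is nonincreasing as long as \<open>\<Phi> \<ge> \<epsilon>\<close>, which drives \<open>V\<close> negative by time \<open>u\<close>.\<close>
    have "V u + \<epsilon> * u \<le> V T + \<epsilon> * T"
    proof (rule has_real_derivative_nonpos_imp_antimono_within[OF \<open>T \<le> u\<close>, of "{0..}"])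
      fix t assume t: "t \<in> {T..u}"
      then obtain D where D: "(V has_real_derivative D) (at t within {0..})" "D \<le> - \<Phi> t"
        using V_deriv[of t] \<open>T \<ge> 0\<close> by auto
      have "((\<lambda>t. V t + \<epsilon> * t) has_real_derivative D + \<epsilon> * 1) (at t within {0..})"
        by (intro DERIV_add DERIV_cmult DERIV_ident D(1))
      then show "\<exists>D. ((\<lambda>t. V t + \<epsilon> * t) has_real_derivative D) (at t within {0..}) \<and> D \<le> 0"
        using large[of t] t D(2) by auto
    qed (use \<open>T \<ge> 0\<close> in auto)
    moreover have "\<epsilon> * (u - T) = V T + \<epsilon>"
      using \<open>\<epsilon> > 0\<close> by (simp add: u_def field_simps)
    ultimately have "V u \<le> - \<epsilon>"
      using right_diff_distrib[of \<epsilon> u T] by linarith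
    then show False
      using V_nonneg[of u] \<open>T \<le> u\<close> \<open>T \<ge> 0\<close> \<open>\<epsilon> > 0\<close> by linarith
  qed
  have "\<forall>n. \<exists>t. t \<ge> real n \<and> \<Phi> t < inverse (real (Suc n))"
    using small by (metis of_nat_0_le_iff inverse_positive_iff_positive of_nat_0_less_iff zero_less_Suc)
  then obtain s where s: "\<And>n. s n \<ge> real n" "\<And>n. \<Phi> (s n) < inverse (real (Suc n))"
    by metis
  have "(\<lambda>n. \<Phi> (s n)) \<longlonglongrightarrow> 0"
  proof (rule tendsto_sandwich[OF _ _ tendsto_const LIMSEQ_inverse_real_of_nat])
    show "\<forall>\<^sub>F n in sequentially. 0 \<le> \<Phi> (s n)"
      by (intro always_eventually allI \<Phi>_nonneg order_trans[OF of_nat_0_le_iff s(1)])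
    show "\<forall>\<^sub>F n in sequentially. \<Phi> (s n) \<le> inverse (real (Suc n))"
      using s(2) by (simp add: less_imp_le)
  qed
  with s(1) show thesis by (rule that)
qed

lemma antimono_tendsto_zero_from_seq:
  fixes f :: "real \<Rightarrow> real"
  assumes nonneg: "\<And>t. t \<ge> 0 \<Longrightarrow> f t \<ge> 0"
    and antimono: "\<And>s u. 0 \<le> s \<Longrightarrow> s \<le> u \<Longrightarrow> f u \<le> f s"
    and s_nonneg: "\<And>n. s n \<ge> 0" and lim: "(\<lambda>n. f (s n)) \<longlonglongrightarrow> 0"
  shows "(f \<longlongrightarrow> 0) at_top"
proof (rule order_tendstoI)
  fix e :: real assume "e < 0"
  then show "\<forall>\<^sub>F t in at_top. e < f t"
    using nonneg by (intro eventually_at_top_linorderI[of 0]) force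
next
  fix e :: real assume "0 < e"
  then obtain N where N: "f (s N) < e"
    using order_tendstoD(2)[OF lim] by (meson eventually_sequentially order_refl)
  show "\<forall>\<^sub>F t in at_top. f t < e"
    using antimono[OF s_nonneg[of N]] N by (intro eventually_at_top_linorderI[of "s N"]) force
qed

lemma bounded_family_convergent_subseq:
  fixes f :: "nat \<Rightarrow> 'n::finite \<Rightarrow> 'a::{real_normed_vector,heine_borel}"
  assumes "\<And>n i. norm (f n i) \<le> K"
  obtains r w where "strict_mono r" "\<And>i. (\<lambda>n. f (r n) i) \<longlonglongrightarrow> w i"
proof -
  define v where "v n = (\<chi> i. f n i)" for n
  have "norm (v n) \<le> real CARD('n) * K" for n
  proof -
    have "norm (v n) \<le> (\<Sum>i\<in>UNIV. norm (f n i))"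
      unfolding v_def norm_vec_def by (rule order_trans[OF L2_set_le_sum]) auto
    also have "\<dots> \<le> real CARD('n) * K"
      using sum_bounded_above[of UNIV "\<lambda>i. norm (f n i)" K] assms by simp
    finally show ?thesis .
  qed
  then have "bounded (range v)"
    by (auto simp: bounded_iff)
  then obtain l r where r: "strict_mono r" and l: "(v \<circ> r) \<longlonglongrightarrow> l"
    using bounded_imp_convergent_subsequence by blast
  have "(\<lambda>n. f (r n) i) \<longlonglongrightarrow> l $ i" for i
    using tendsto_vec_nth[OF l, of i] by (simp add: v_def o_def)
  with r show thesis by (rule that)
qed

lemma closest_point_residual_norm_le_inner:
  fixes S :: "'a::{real_inner,heine_borel} set"
  assumes "convex S" "closed S" "z \<in> S"
  shows "(norm (y - closest_point S y))\<^sup>2 \<le> inner (y - closest_point S y) (y - z)"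
proof -
  let ?p = "closest_point S y"
  have "inner (y - ?p) (z - ?p) \<le> 0"
    by (rule closest_point_dot[OF assms])
  moreover have "inner (y - ?p) (y - z) = (norm (y - ?p))\<^sup>2 - inner (y - ?p) (z - ?p)"
    by (simp add: power2_norm_eq_inner inner_diff_right)
  ultimately show ?thesis
    by linarith
qed

lemma subgradient_pos_part_le_inner:
  assumes "is_subgradient (\<lambda>y. max (g y) 0) y d" "g z \<le> 0"
  shows "max (g y) 0 \<le> inner d (y - z)"
proof -
  have "max (g y) 0 + inner d (z - y) \<le> max (g z) 0"
    using assms(1) unfolding is_subgradient_def by blast
  moreover have "inner d (z - y) = - inner d (y - z)"
    by (simp add: inner_diff_right)
  ultimately show ?thesis
    using max_absorb2[OF assms(2)] by linarith
qed

lemma sum_laplacian_inner: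
  fixes p :: "'n::finite \<Rightarrow> 'a::real_inner"
  assumes a_sym: "\<And>i j. a i j = a j i"
  shows "(\<Sum>i\<in>UNIV. inner (\<Sum>j\<in>UNIV. a i j *\<^sub>R (p j - p i)) (p i))
    = - (1/2) * (\<Sum>i\<in>UNIV. \<Sum>j\<in>UNIV. a i j * (norm (p j - p i))\<^sup>2)"
proof -
  let ?S = "\<Sum>i\<in>UNIV. \<Sum>j\<in>UNIV. a i j * inner (p j - p i) (p i)"
  have "?S = (\<Sum>j\<in>UNIV. \<Sum>i\<in>UNIV. a i j * inner (p j - p i) (p i))"
    by (rule sum.swap)
  also have "\<dots> = (\<Sum>i\<in>UNIV. \<Sum>j\<in>UNIV. a i j * inner (p i - p j) (p j))"
    using a_sym by simp
  finally have swapped: "?S = (\<Sum>i\<in>UNIV. \<Sum>j\<in>UNIV. a i j * inner (p i - p j) (p j))" .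
  have "2 * ?S = ?S + (\<Sum>i\<in>UNIV. \<Sum>j\<in>UNIV. a i j * inner (p i - p j) (p j))"
    using swapped by simp
  also have "\<dots> = (\<Sum>i\<in>UNIV. \<Sum>j\<in>UNIV. a i j * (inner (p j - p i) (p i) + inner (p i - p j) (p j)))"
    by (simp add: sum.distrib[symmetric] distrib_left)
  also have "\<dots> = (\<Sum>i\<in>UNIV. \<Sum>j\<in>UNIV. - (a i j * (norm (p j - p i))\<^sup>2))"
    by (intro sum.cong refl)
      (simp add: power2_norm_eq_inner inner_diff_left inner_diff_right inner_commute algebra_simps)
  finally show ?thesis
    by (simp add: inner_sum_left sum_negf)
qed

definition cfp_energy ::
    "('n::finite \<Rightarrow> 'n \<Rightarrow> real) \<Rightarrow> ('n \<Rightarrow> 'a::{real_inner,heine_borel} \<Rightarrow> real) \<Rightarrow>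
     ('n \<Rightarrow> 'a set) \<Rightarrow> real \<Rightarrow> ('n \<Rightarrow> 'a) \<Rightarrow> real" where
  "cfp_energy a g X \<tau> y =
     (1/2) * (\<Sum>i\<in>UNIV. \<Sum>j\<in>UNIV. a i j * (norm (y j - y i))\<^sup>2)
     + \<tau> * (\<Sum>i\<in>UNIV. (norm (y i - closest_point (X i) (y i)))\<^sup>2)
     + \<tau> * (\<Sum>i\<in>UNIV. max (g i (y i)) 0)"

definition cfp_field ::
    "('n::finite \<Rightarrow> 'n \<Rightarrow> bool) \<Rightarrow> ('n \<Rightarrow> 'n \<Rightarrow> real) \<Rightarrow> ('n \<Rightarrow> 'a::{real_inner,heine_borel} set) \<Rightarrow>
     ('n \<Rightarrow> 'a \<Rightarrow> 'a) \<Rightarrow> real \<Rightarrow> ('n \<Rightarrow> 'a) \<Rightarrow> 'n \<Rightarrow> 'a" where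
  "cfp_field E a X dg \<tau> y i =
     (\<Sum>j\<in>{j. E i j}. a i j *\<^sub>R (y j - y i))
     - \<tau> *\<^sub>R ((y i - closest_point (X i) (y i)) + dg i (y i))"

lemma cfp_field_inner_le_neg_energy:
  fixes y :: "'n::finite \<Rightarrow> 'a::{real_inner,heine_borel}"
  assumes a_sym: "\<And>i j. a i j = a j i"
    and a_zero: "\<And>i j. \<not> E i j \<Longrightarrow> a i j = 0"
    and X_closed: "\<And>i. closed (X i)" and X_convex: "\<And>i. convex (X i)"
    and dg_sel: "\<And>i. subgrad_plus_selection (g i) (dg i)"
    and z: "z \<in> cfp_solutions g X" and \<tau>: "\<tau> \<ge> 0"
  shows "(\<Sum>i\<in>UNIV. inner (cfp_field E a X dg \<tau> y i) (y i - z)) \<le> - cfp_energy a g X \<tau> y"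
proof -
  have zX: "z \<in> X i" and zg: "g i z \<le> 0" for i
    using z by (auto simp: cfp_solutions_def)
  have coupling: "(\<Sum>j\<in>{j. E i j}. a i j *\<^sub>R (y j - y i)) = (\<Sum>j\<in>UNIV. a i j *\<^sub>R (y j - y i))" for i
    by (rule sum.mono_neutral_left) (auto simp: a_zero)
  let ?A = "\<Sum>i\<in>UNIV. \<Sum>j\<in>UNIV. a i j * (norm (y j - y i))\<^sup>2"
  let ?B = "\<Sum>i\<in>UNIV. (norm (y i - closest_point (X i) (y i)))\<^sup>2"
  let ?C = "\<Sum>i\<in>UNIV. max (g i (y i)) 0"
  let ?B' = "\<Sum>i\<in>UNIV. inner (y i - closest_point (X i) (y i)) (y i - z)"
  let ?C' = "\<Sum>i\<in>UNIV. inner (dg i (y i)) (y i - z)"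
  have "?B \<le> ?B'"
    by (intro sum_mono closest_point_residual_norm_le_inner X_convex X_closed zX)
  then have B: "\<tau> * ?B \<le> \<tau> * ?B'"
    using \<tau> by (rule mult_left_mono)
  have "?C \<le> ?C'"
    using dg_sel by (intro sum_mono subgradient_pos_part_le_inner zg) (auto simp: subgrad_plus_selection_def)
  then have C: "\<tau> * ?C \<le> \<tau> * ?C'"
    using \<tau> by (rule mult_left_mono)
  have "(\<Sum>i\<in>UNIV. inner (cfp_field E a X dg \<tau> y i) (y i - z))
      = (\<Sum>i\<in>UNIV. inner (\<Sum>j\<in>UNIV. a i j *\<^sub>R (y j - y i)) (y i - z)
          - \<tau> * inner (y i - closest_point (X i) (y i)) (y i - z) - \<tau> * inner (dg i (y i)) (y i - z))"
    unfolding cfp_field_def coupling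
    by (intro sum.cong refl) (simp add: inner_diff_left inner_add_left distrib_left)
  also have "\<dots> = (\<Sum>i\<in>UNIV. inner (\<Sum>j\<in>UNIV. a i j *\<^sub>R (y j - y i)) (y i - z)) - \<tau> * ?B' - \<tau> * ?C'"
    by (simp only: sum_subtractf sum_distrib_left)
  also have "\<dots> = - (1/2) * ?A - \<tau> * ?B' - \<tau> * ?C'"
    using sum_laplacian_inner[of a "\<lambda>i. y i - z", OF a_sym] by simp
  also have "\<dots> \<le> - cfp_energy a g X \<tau> y"
    using B C unfolding cfp_energy_def by linarith
  finally show ?thesis .
qed

lemma cfp_energy_bounds:
  fixes y :: "'n::finite \<Rightarrow> 'a::{real_inner,heine_borel}"
  assumes a_nonneg: "\<And>k l. a k l \<ge> 0" and \<tau>: "\<tau> \<ge> 0"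
  shows cfp_energy_nonneg: "0 \<le> cfp_energy a g X \<tau> y"
    and cfp_energy_ge_edge: "a i j * (norm (y j - y i))\<^sup>2 \<le> 2 * cfp_energy a g X \<tau> y"
    and cfp_energy_ge_residual: "\<tau> * (norm (y i - closest_point (X i) (y i)))\<^sup>2 \<le> cfp_energy a g X \<tau> y"
    and cfp_energy_ge_pos_part: "\<tau> * max (g i (y i)) 0 \<le> cfp_energy a g X \<tau> y"
proof -
  let ?A = "\<Sum>i\<in>UNIV. \<Sum>j\<in>UNIV. a i j * (norm (y j - y i))\<^sup>2"
  let ?B = "\<Sum>i\<in>UNIV. (norm (y i - closest_point (X i) (y i)))\<^sup>2"
  let ?C = "\<Sum>i\<in>UNIV. max (g i (y i)) 0"
  have "a i j * (norm (y j - y i))\<^sup>2 \<le> (\<Sum>j\<in>UNIV. a i j * (norm (y j - y i))\<^sup>2)"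
    using a_nonneg by (intro member_le_sum) auto
  also have "\<dots> \<le> ?A"
    using a_nonneg by (intro member_le_sum sum_nonneg) auto
  finally have A: "a i j * (norm (y j - y i))\<^sup>2 \<le> ?A" .
  have B: "\<tau> * (norm (y i - closest_point (X i) (y i)))\<^sup>2 \<le> \<tau> * ?B"
    using \<tau> by (intro mult_left_mono member_le_sum) auto
  have C: "\<tau> * max (g i (y i)) 0 \<le> \<tau> * ?C"
    using \<tau> by (intro mult_left_mono member_le_sum) auto
  have "0 \<le> ?A" "0 \<le> \<tau> * ?B" "0 \<le> \<tau> * ?C"
    using a_nonneg \<tau> by (auto intro!: sum_nonneg mult_nonneg_nonneg)
  moreover have "cfp_energy a g X \<tau> y = (1/2) * ?A + \<tau> * ?B + \<tau> * ?C"
    by (simp add: cfp_energy_def)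
  ultimately show "0 \<le> cfp_energy a g X \<tau> y"
    and "a i j * (norm (y j - y i))\<^sup>2 \<le> 2 * cfp_energy a g X \<tau> y"
    and "\<tau> * (norm (y i - closest_point (X i) (y i)))\<^sup>2 \<le> cfp_energy a g X \<tau> y"
    and "\<tau> * max (g i (y i)) 0 \<le> cfp_energy a g X \<tau> y"
    using A B C by linarith+
qed

lemma cfp_energy_le_zeroD:
  fixes w :: "'n::finite \<Rightarrow> 'a::{real_inner,heine_borel}"
  assumes a_nonneg: "\<And>k l. a k l \<ge> 0" and \<tau>: "\<tau> > 0"
    and le_zero: "cfp_energy a g X \<tau> w \<le> 0"
  shows "0 < a i j \<Longrightarrow> w j = w i"
    and "closed (X i) \<Longrightarrow> X i \<noteq> {} \<Longrightarrow> w i \<in> X i"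
    and "g i (w i) \<le> 0"
proof -
  note bounds = cfp_energy_bounds[where a = a and \<tau> = \<tau> and g = g and X = X and y = w, OF a_nonneg less_imp_le[OF \<tau>]]
  show "w j = w i" if "0 < a i j"
  proof -
    have "a i j * (norm (w j - w i))\<^sup>2 \<le> 0"
      using bounds(2)[where i = i and j = j] le_zero by linarith
    then have "(norm (w j - w i))\<^sup>2 \<le> 0"
      using that by (simp add: mult_le_0_iff)
    then show ?thesis
      by simp
  qed
  have "\<tau> * (norm (w i - closest_point (X i) (w i)))\<^sup>2 \<le> 0"
    using bounds(3)[where i = i] le_zero by linarith
  then have "w i = closest_point (X i) (w i)"
    using \<tau> by (simp add: mult_le_0_iff)
  then show "w i \<in> X i" if "closed (X i)" "X i \<noteq> {}"
    using closest_point_in_set[OF that, of "w i"] by metis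
  have "\<tau> * max (g i (w i)) 0 \<le> 0"
    using bounds(4)[where i = i] le_zero by linarith
  then show "g i (w i) \<le> 0"
    using \<tau> by (simp add: mult_le_0_iff)
qed

lemma tendsto_cfp_energy:
  assumes lim: "\<And>i. ((\<lambda>n. y n i) \<longlongrightarrow> w i) F"
    and g_cont: "\<And>i. isCont (g i) (w i)"
    and proj_cont: "\<And>i. isCont (closest_point (X i)) (w i)"
  shows "((\<lambda>n. cfp_energy a g X \<tau> (y n)) \<longlongrightarrow> cfp_energy a g X \<tau> w) F"
  unfolding cfp_energy_def
  by (intro tendsto_intros lim isCont_tendsto_compose[OF g_cont] isCont_tendsto_compose[OF proj_cont])

locale cfp_flow =
  fixes E :: "'n::finite \<Rightarrow> 'n \<Rightarrow> bool"
    and a :: "'n \<Rightarrow> 'n \<Rightarrow> real"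
    and g :: "'n \<Rightarrow> 'a::{real_inner,heine_borel} \<Rightarrow> real"
    and X :: "'n \<Rightarrow> 'a set"
    and dg :: "'n \<Rightarrow> 'a \<Rightarrow> 'a"
    and x :: "'n \<Rightarrow> real \<Rightarrow> 'a"
    and \<tau> :: real
  assumes E_connected: "\<And>i j. E\<^sup>*\<^sup>* i j"
    and a_sym: "\<And>i j. a i j = a j i"
    and a_nonneg: "\<And>i j. a i j \<ge> 0"
    and a_pos_iff: "\<And>i j. a i j > 0 \<longleftrightarrow> E i j"
    and g_cont: "\<And>i. continuous_on UNIV (g i)"
    and X_closed: "\<And>i. closed (X i)"
    and X_convex: "\<And>i. convex (X i)"
    and dg_sel: "\<And>i. subgrad_plus_selection (g i) (dg i)"
    and solvable: "cfp_solutions g X \<noteq> {}"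
    and tau_pos: "\<tau> > 0"
    and flow: "\<And>i t. t \<ge> 0 \<Longrightarrow>
      (x i has_vector_derivative cfp_field E a X dg \<tau> (\<lambda>j. x j t) i) (at t within {0..})"
begin

lemma a_eq_0_if_not_edge: "\<not> E i j \<Longrightarrow> a i j = 0"
  using a_nonneg[of i j] a_pos_iff[of i j] by linarith

lemma X_nonempty: "X i \<noteq> {}"
  using solvable by (auto simp: cfp_solutions_def)

definition sq_dist :: "'a \<Rightarrow> real \<Rightarrow> real" where
  "sq_dist z t = (\<Sum>i\<in>UNIV. (norm (x i t - z))\<^sup>2)"

abbreviation energy :: "real \<Rightarrow> real" where
  "energy t \<equiv> cfp_energy a g X \<tau> (\<lambda>i. x i t)"

lemma sq_dist_nonneg: "0 \<le> sq_dist z t"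
  unfolding sq_dist_def by (intro sum_nonneg) auto

lemma energy_nonneg: "0 \<le> energy t"
  using cfp_energy_nonneg[where a = a, OF a_nonneg less_imp_le[OF tau_pos]] .

lemma zero_energy_imp_consensus_solution:
  assumes "cfp_energy a g X \<tau> w \<le> 0"
  obtains c where "c \<in> cfp_solutions g X" "\<And>i. w i = c"
proof -
  note w_props = cfp_energy_le_zeroD[where a = a and \<tau> = \<tau> and g = g and X = X and w = w,
      OF a_nonneg tau_pos assms]
  have "w i = w j" for i j
    using E_connected[of i j]
  proof (induction rule: rtranclp_induct)
    case (step y z)
    with w_props(1)[where i = y and j = z] a_pos_iff[of y z] show ?case
      by simp
  qed simp
  define c where "c = w undefined"
  then have w_const: "w i = c" for i
    using \<open>\<And>i j. w i = w j\<close> by simp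
  have "c \<in> X i" "g i c \<le> 0" for i
    using w_props(2)[OF X_closed X_nonempty, of i] w_props(3)[of i] w_const[of i] by simp_all
  then have "c \<in> cfp_solutions g X"
    by (simp add: cfp_solutions_def)
  from this w_const show thesis
    by (rule that)
qed

lemma sq_dist_deriv_le_energy:
  assumes z: "z \<in> cfp_solutions g X" and "t \<ge> 0"
  shows "\<exists>D. (sq_dist z has_real_derivative D) (at t within {0..}) \<and> D \<le> - 2 * energy t"
proof (intro exI conjI)
  let ?F = "\<lambda>i. cfp_field E a X dg \<tau> (\<lambda>j. x j t) i"
  show "(sq_dist z has_real_derivative (\<Sum>i\<in>UNIV. 2 * inner (?F i) (x i t - z))) (at t within {0..})"
    unfolding sq_dist_def
    by (intro DERIV_sum has_real_derivative_norm_diff_square flow \<open>t \<ge> 0\<close>)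
  have "(\<Sum>i\<in>UNIV. inner (?F i) (x i t - z)) \<le> - energy t"
    by (rule cfp_field_inner_le_neg_energy[OF a_sym a_eq_0_if_not_edge X_closed X_convex dg_sel z
          less_imp_le[OF tau_pos]])
  then show "(\<Sum>i\<in>UNIV. 2 * inner (?F i) (x i t - z)) \<le> - 2 * energy t"
    by (simp add: sum_distrib_left[symmetric])
qed

lemma sq_dist_antimono:
  assumes z: "z \<in> cfp_solutions g X" and "0 \<le> s" "s \<le> u"
  shows "sq_dist z u \<le> sq_dist z s"
proof (rule has_real_derivative_nonpos_imp_antimono_within[OF \<open>s \<le> u\<close>, of "{0..}"])
  fix t assume "t \<in> {s..u}"
  then obtain D where "(sq_dist z has_real_derivative D) (at t within {0..})" "D \<le> - 2 * energy t"
    using sq_dist_deriv_le_energy[OF z, of t] \<open>0 \<le> s\<close> by auto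
  with energy_nonneg[of t] show "\<exists>D. (sq_dist z has_real_derivative D) (at t within {0..}) \<and> D \<le> 0"
    by (intro exI[of _ D]) auto
qed (use \<open>0 \<le> s\<close> in auto)

lemma trajectory_bounded:
  obtains K where "\<And>i t. t \<ge> 0 \<Longrightarrow> norm (x i t) \<le> K"
proof -
  obtain z where z: "z \<in> cfp_solutions g X"
    using solvable by blast
  have "norm (x i t) \<le> norm z + sqrt (sq_dist z 0)" if "t \<ge> 0" for i t
  proof -
    have "(norm (x i t - z))\<^sup>2 \<le> sq_dist z t"
      unfolding sq_dist_def by (rule member_le_sum) auto
    also have "\<dots> \<le> sq_dist z 0"
      by (rule sq_dist_antimono[OF z order_refl that])
    finally have "norm (x i t - z) \<le> sqrt (sq_dist z 0)"
      by (rule real_le_rsqrt)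
    then show ?thesis
      using norm_triangle_sub[of "x i t" z] by linarith
  qed
  then show thesis by (rule that)
qed

lemma energy_vanishes_along_seq:
  obtains s where "\<And>n. s n \<ge> real n" "(\<lambda>n. energy (s n)) \<longlonglongrightarrow> 0"
proof -
  obtain z where z: "z \<in> cfp_solutions g X"
    using solvable by blast
  obtain s where s: "\<And>n. s n \<ge> real n" "(\<lambda>n. 2 * energy (s n)) \<longlonglongrightarrow> 0"
    by (rule dissipation_vanishes_along_seq[of "sq_dist z" "\<lambda>t. 2 * energy t"])
      (use sq_dist_nonneg energy_nonneg sq_dist_deriv_le_energy[OF z] in auto)
  have "(\<lambda>n. energy (s n)) \<longlonglongrightarrow> 0"
    using tendsto_mult_left[OF s(2), of "1/2"] by simp
  with s(1) show thesis by (rule that)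
qed

lemma consensus_solution_limit_point:
  obtains c s where "c \<in> cfp_solutions g X" "\<And>n. s n \<ge> 0" "\<And>i. (\<lambda>n. x i (s n)) \<longlonglongrightarrow> c"
proof -
  obtain s where s_ge: "\<And>n. s n \<ge> real n" and energy_lim: "(\<lambda>n. energy (s n)) \<longlonglongrightarrow> 0"
    using energy_vanishes_along_seq by blast
  have s_nonneg: "s n \<ge> 0" for n
    using s_ge[of n] by (meson of_nat_0_le_iff order_trans)
  obtain K where K: "\<And>i t. t \<ge> 0 \<Longrightarrow> norm (x i t) \<le> K"
    using trajectory_bounded by blast
  have "norm (x i (s n)) \<le> K" for n i
    using K s_nonneg by blast
  then obtain r w where r: "strict_mono r" and w: "\<And>i. (\<lambda>n. x i (s (r n))) \<longlonglongrightarrow> w i"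
    using bounded_family_convergent_subseq[of "\<lambda>n i. x i (s n)" K] by blast
  have proj_cont: "isCont (closest_point (X i)) (w i)" for i
    by (rule continuous_at_closest_point[OF X_convex X_closed X_nonempty])
  have g_cont_at: "isCont (g i) (w i)" for i
    using g_cont[of i] by (simp add: continuous_on_eq_continuous_at)
  have "(\<lambda>n. energy (s (r n))) \<longlonglongrightarrow> cfp_energy a g X \<tau> w"
    by (rule tendsto_cfp_energy) (fact w g_cont_at proj_cont)+
  moreover have "(\<lambda>n. energy (s (r n))) \<longlonglongrightarrow> 0"
    using LIMSEQ_subseq_LIMSEQ[OF energy_lim r] by (simp add: o_def)
  ultimately have "cfp_energy a g X \<tau> w = 0"
    by (rule LIMSEQ_unique)
  then have "cfp_energy a g X \<tau> w \<le> 0"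
    by simp
  then obtain c where c: "c \<in> cfp_solutions g X" and w_const: "\<And>i. w i = c"
    using zero_energy_imp_consensus_solution by blast
  have "(\<lambda>n. x i ((s \<circ> r) n)) \<longlonglongrightarrow> c" for i
    using w[of i] w_const[of i] by simp
  moreover have "(s \<circ> r) n \<ge> 0" for n
    using s_nonneg by simp
  ultimately show thesis
    using c that[of c "s \<circ> r"] by blast
qed

lemma trajectory_converges:
  obtains c where "c \<in> cfp_solutions g X" "\<And>i. (x i \<longlongrightarrow> c) at_top"
proof -
  obtain c s where c: "c \<in> cfp_solutions g X" and s: "\<And>n. s n \<ge> 0"
    and lim: "\<And>i. (\<lambda>n. x i (s n)) \<longlonglongrightarrow> c"
    using consensus_solution_limit_point by blast
  have sq_dist_lim: "(sq_dist c \<longlongrightarrow> 0) at_top"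
  proof (rule antimono_tendsto_zero_from_seq)
    show "0 \<le> sq_dist c t" if "0 \<le> t" for t
      by (rule sq_dist_nonneg)
    show "sq_dist c u \<le> sq_dist c t" if "0 \<le> t" "t \<le> u" for t u
      by (rule sq_dist_antimono[OF c that])
    show "0 \<le> s n" for n
      by (rule s)
    have "(\<lambda>n. sq_dist c (s n)) \<longlonglongrightarrow> (\<Sum>i::'n\<in>UNIV. (norm (c - c))\<^sup>2)"
      unfolding sq_dist_def by (intro tendsto_intros lim)
    then show "(\<lambda>n. sq_dist c (s n)) \<longlonglongrightarrow> 0"
      by simp
  qed
  have "(x i \<longlongrightarrow> c) at_top" for i
  proof -
    have "((\<lambda>t. (norm (x i t - c))\<^sup>2) \<longlongrightarrow> 0) at_top"
    proof (rule tendsto_sandwich[OF _ _ tendsto_const sq_dist_lim])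
      show "\<forall>\<^sub>F t in at_top. 0 \<le> (norm (x i t - c))\<^sup>2"
        by simp
      show "\<forall>\<^sub>F t in at_top. (norm (x i t - c))\<^sup>2 \<le> sq_dist c t"
        unfolding sq_dist_def by (intro always_eventually allI member_le_sum) auto
    qed
    from tendsto_real_sqrt[OF this] show ?thesis
      by (simp add: tendsto_norm_zero_iff LIM_zero_iff)
  qed
  with c show thesis
    using that by blast
qed

end

theorem corollary2:
  fixes E :: "'n::finite \<Rightarrow> 'n \<Rightarrow> bool"
    and a :: "'n \<Rightarrow> 'n \<Rightarrow> real"
    and g :: "'n \<Rightarrow> 'a::euclidean_space \<Rightarrow> real"
    and X :: "'n \<Rightarrow> 'a set"
    and dg :: "'n \<Rightarrow> 'a \<Rightarrow> 'a"
    and x :: "'n \<Rightarrow> real \<Rightarrow> 'a"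
    and \<tau> :: real
  assumes E_sym: "\<And>i j. E i j \<longleftrightarrow> E j i"
    and E_irrefl: "\<And>i. \<not> E i i"
    and E_connected: "\<And>i j. E\<^sup>*\<^sup>* i j"
    and a_sym: "\<And>i j. a i j = a j i"
    and a_nonneg: "\<And>i j. a i j \<ge> 0"
    and a_pos_iff: "\<And>i j. a i j > 0 \<longleftrightarrow> E i j"
    and g_convex: "\<And>i. convex_on UNIV (g i)"
    and g_cont: "\<And>i. continuous_on UNIV (g i)"
    and X_closed: "\<And>i. closed (X i)"
    and X_convex: "\<And>i. convex (X i)"
    and dg_sel: "\<And>i. subgrad_plus_selection (g i) (dg i)"
    and dg_pc: "\<And>i. piecewise_continuous (dg i)"
    and nonempty: "cfp_solutions g X \<noteq> {}"
    and tau_pos: "\<tau> > 0"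
    and ode: "\<And>i t. t \<ge> 0 \<Longrightarrow>
       (x i has_vector_derivative
          ((\<Sum>j\<in>{j. E i j}. a i j *\<^sub>R (x j t - x i t))
           - \<tau> *\<^sub>R ((x i t - closest_point (X i) (x i t)) + dg i (x i t))))
       (at t within {0..})"
  shows "(\<forall>i j. ((\<lambda>t. norm (x i t - x j t)) \<longlongrightarrow> 0) at_top) \<and>
         (\<exists>xs\<in>cfp_solutions g X. \<forall>i. (x i \<longlongrightarrow> xs) at_top)"
proof -
  interpret cfp_flow E a g X dg x \<tau>
  proof unfold_locales
    show "(x i has_vector_derivative cfp_field E a X dg \<tau> (\<lambda>j. x j t) i) (at t within {0..})"
      if "t \<ge> 0" for i t
      using ode[OF that] by (simp add: cfp_field_def)
  qed (fact assms)+
  obtain c where c: "c \<in> cfp_solutions g X" and lim: "\<And>i. (x i \<longlongrightarrow> c) at_top"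
    using trajectory_converges by blast
  have "((\<lambda>t. norm (x i t - x j t)) \<longlongrightarrow> 0) at_top" for i j
    using tendsto_norm[OF tendsto_diff[OF lim[of i] lim[of j]]] by simp
  with c lim show ?thesis
    by blast
qed

end
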